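(* Let $\Omega\subset\mathbb{R}^d$ be a compact domain with smooth boundary and outward normal $\mathbf{n}$, and let $\mu,\nu\in\mathcal{P}(\Omega)$ have $C^1$ densities (also denoted $\mu(x),\nu(x)$, with $\mu>0$). Let $\chi$ be a $C^1$ vector field on $\Omega$ with $\mathrm{div}\,\chi=0$ in $\Omega$ and $\chi\cdot\mathbf{n}=0$ on $\partial\Omega$. Let $s:\Omega\times[0,\infty)\to\Omega$ be differentiable, with $s(\cdot,0)=\mathrm{Id}$, $\frac{\partial s}{\partial t}(x,t)=\frac{1}{\mu(s(x,t))}\chi(s(x,t))$, and for each $t$ invertible in $x$ with inverse $s^{-1}(\cdot,t)$ (i.e. $s^{-1}(s(x,t),t)=x=s(s^{-1}(x,t),t)$), and assume $[s(\cdot,t)]_*\mu=\mu$ for all $t$. Let $T^0:\Omega\to\Omega$ satisfy $T^0_*\mu=\nu$ and set $T^t:=T^0\circ s^{-1}(\cdot,t)$. Let $f\in C^1(\Omega;\mathbb{R}^m)$, $g\in \mathrm{L}^2(\nu;\mathbb{R}^m)$, and $$\varepsilon(T)=\int_\Omega\big(|T(x)-x|_2^2+|g(T(x))-f(x)|_2^2\big)\mu(x)\,\mathrm{d}x.$$ Assuming enough integrability to differentiate under the integral sign, $$\frac{\mathrm{d}}{\mathrm{d}t}\varepsilon(T^t)=-\int_\Omega Q(x,t)\cdot\chi(x)\,\mathrm{d}x,\qquad Q(x,t)=2T^t(x)+2\sum_{i=1}^m g_i(T^t(x))\,\nabla f_i(x).$$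
   Context: $|z|_2$ is the Euclidean norm; $T_*\mu(A)=\mu(T^{-1}(A))$ denotes pushforward; $g_i,f_i$ are the components of $g,f$. *)

theory Defs
  imports "HOL-Analysis.Analysis" "HOL-Probability.Probability"
begin

text \<open>C^k regularity on a set U (intended: U open), via iterated partial derivatives
  along the standard basis. C^{k+1} = differentiable with all first partials C^k.\<close>
fun Ck_on :: "nat \<Rightarrow> 'a::euclidean_space set \<Rightarrow> ('a \<Rightarrow> 'b::real_normed_vector) \<Rightarrow> bool" where
  "Ck_on 0 U f = continuous_on U f"
| "Ck_on (Suc k) U f =
     ((\<forall>x\<in>U. f differentiable (at x)) \<and>
      (\<forall>b\<in>Basis. Ck_on k U (\<lambda>x. frechet_derivative f (at x) b)))"

definition smooth_on :: "'a::euclidean_space set \<Rightarrow> ('a \<Rightarrow> 'b::real_normed_vector) \<Rightarrow> bool" where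
  "smooth_on U f \<longleftrightarrow> (\<forall>k. Ck_on k U f)"

text \<open>C^1 up to the boundary of a (closed) set S: C^1 on some open neighbourhood of S.\<close>
definition C1_on :: "'a::euclidean_space set \<Rightarrow> ('a \<Rightarrow> 'b::real_normed_vector) \<Rightarrow> bool" where
  "C1_on S f \<longleftrightarrow> (\<exists>U. open U \<and> S \<subseteq> U \<and> Ck_on 1 U f)"

definition grad :: "('a::euclidean_space \<Rightarrow> real) \<Rightarrow> 'a \<Rightarrow> 'a" where
  "grad \<phi> x = (\<Sum>b\<in>Basis. frechet_derivative \<phi> (at x) b *\<^sub>R b)"

definition divergence :: "('a::euclidean_space \<Rightarrow> 'a) \<Rightarrow> 'a \<Rightarrow> real" where
  "divergence F x = (\<Sum>b\<in>Basis. frechet_derivative F (at x) b \<bullet> b)"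

definition local_defining_fn :: "'a::euclidean_space set \<Rightarrow> 'a set \<Rightarrow> ('a \<Rightarrow> real) \<Rightarrow> bool" where
  "local_defining_fn \<Omega> U \<rho> \<longleftrightarrow> open U \<and> smooth_on U \<rho> \<and> (\<forall>y\<in>U. grad \<rho> y \<noteq> 0)
      \<and> \<Omega> \<inter> U = {y\<in>U. \<rho> y \<le> 0}"

definition compact_smooth_domain :: "'a::euclidean_space set \<Rightarrow> bool" where
  "compact_smooth_domain \<Omega> \<longleftrightarrow> compact \<Omega> \<and> interior \<Omega> \<noteq> {} \<and> connected (interior \<Omega>)
      \<and> \<Omega> = closure (interior \<Omega>)
      \<and> (\<forall>x\<in>frontier \<Omega>. \<exists>U \<rho>. x \<in> U \<and> local_defining_fn \<Omega> U \<rho>)"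

definition outward_normal :: "'a::euclidean_space set \<Rightarrow> 'a \<Rightarrow> 'a" where
  "outward_normal \<Omega> x = (SOME n. \<exists>U \<rho>. x \<in> U \<and> local_defining_fn \<Omega> U \<rho>
        \<and> n = (1 / norm (grad \<rho> x)) *\<^sub>R grad \<rho> x)"

definition dens_measure :: "'a::euclidean_space set \<Rightarrow> ('a \<Rightarrow> real) \<Rightarrow> 'a measure" where
  "dens_measure \<Omega> d = density (restrict_space lborel \<Omega>) (\<lambda>x. ennreal (d x))"

definition energy :: "'a::euclidean_space set \<Rightarrow> ('a \<Rightarrow> real) \<Rightarrow> ('a \<Rightarrow> real^'m)
     \<Rightarrow> ('a \<Rightarrow> real^'m) \<Rightarrow> ('a \<Rightarrow> 'a) \<Rightarrow> real" where
  "energy \<Omega> \<mu> f g T = set_lebesgue_integral lborel \<Omega>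
      (\<lambda>x. ((norm (T x - x))\<^sup>2 + (norm (g (T x) - f x))\<^sup>2) * \<mu> x)"

end

theory Submission
  imports Defs
begin

text \<open>Substituting \<open>x = s(y,\<tau>)\<close>, which preserves \<open>\<mu>\<close>, turns the energy of \<open>T\<^sup>\<tau>\<close> into
  \<open>\<integral> |T\<^sup>0 y - s(y,\<tau>)|\<^sup>2 + |g(T\<^sup>0 y) - f(s(y,\<tau>))|\<^sup>2 d\<mu>(y)\<close>. Expanding the squares, the terms
  \<open>|s|\<^sup>2 + |f(s)|\<^sup>2\<close> integrate to a constant (again by invariance), so only the cross terms
  \<open>\<langle>T\<^sup>0 y, s(y,\<tau>)\<rangle> + \<langle>g(T\<^sup>0 y), f(s(y,\<tau>))\<rangle>\<close> vary. Their \<open>\<tau>\<close>-derivative, computed from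
  \<open>\<partial>\<^sub>t s = \<xi>(s)/\<mu>(s)\<close>, is dominated by \<open>C (1 + |g(T\<^sup>0 y)|)\<close>, which is \<open>\<mu>\<close>-integrable because
  \<open>g \<in> L\<^sup>2(\<nu>)\<close> and \<open>T\<^sup>0\<^sub>*\<mu> = \<nu>\<close>; so one may differentiate under the integral and then undo the
  substitution, the factor \<open>1/\<mu>\<close> cancelling the density. The invariance \<open>s(\<cdot>,t)\<^sub>*\<mu> = \<mu>\<close> is
  assumed outright.\<close>

lemma has_real_derivative_integral:
  fixes F F' :: "'b \<Rightarrow> real \<Rightarrow> real"
  assumes S: "convex S" "t \<in> S"
    and integrable_F: "\<And>\<tau>. \<tau> \<in> S \<Longrightarrow> integrable M (\<lambda>y. F y \<tau>)"
    and deriv: "\<And>y \<tau>. y \<in> space M \<Longrightarrow> \<tau> \<in> S \<Longrightarrow> (F y has_real_derivative F' y \<tau>) (at \<tau> within S)"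
    and bound: "\<And>y \<tau>. y \<in> space M \<Longrightarrow> \<tau> \<in> S \<Longrightarrow> \<bar>F' y \<tau>\<bar> \<le> G y"
    and integrable_G: "integrable M G"
    and measurable_F': "(\<lambda>y. F' y t) \<in> borel_measurable M"
  shows "((\<lambda>\<tau>. \<integral>y. F y \<tau> \<partial>M) has_real_derivative (\<integral>y. F' y t \<partial>M)) (at t within S)"
  unfolding has_field_derivative_iff
proof (rule Lim_within_LIMSEQ, intro allI impI)
  fix X :: "nat \<Rightarrow> real"
  assume X: "(\<forall>n. X n \<noteq> t \<and> X n \<in> S) \<and> X \<longlonglongrightarrow> t"
  define q where "q n y = (F y (X n) - F y t) / (X n - t)" for n y
  have difference_quotient: "((\<integral>y. F y (X n) \<partial>M) - (\<integral>y. F y t \<partial>M)) / (X n - t) = (\<integral>y. q n y \<partial>M)" for n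
    using X integrable_F S by (simp add: q_def Bochner_Integration.integral_diff)
  have "(\<lambda>n. \<integral>y. q n y \<partial>M) \<longlonglongrightarrow> (\<integral>y. F' y t \<partial>M)"
  proof (rule integral_dominated_convergence[OF measurable_F' _ integrable_G])
    show "q n \<in> borel_measurable M" for n
      unfolding q_def using integrable_F[of "X n"] integrable_F[OF S(2)] X by auto
    show "AE y in M. (\<lambda>n. q n y) \<longlonglongrightarrow> F' y t"
    proof (rule AE_I2)
      fix y assume "y \<in> space M"
      then have "((\<lambda>\<tau>. (F y \<tau> - F y t) / (\<tau> - t)) \<longlongrightarrow> F' y t) (at t within S)"
        using deriv S(2) unfolding has_field_derivative_iff by blast
      then show "(\<lambda>n. q n y) \<longlonglongrightarrow> F' y t"
        using X unfolding q_def tendsto_at_iff_sequentially comp_def by auto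
    qed
    show "AE y in M. norm (q n y) \<le> G y" for n
    proof (rule AE_I2)
      fix y assume y: "y \<in> space M"
      have "norm (F y (X n) - F y t) \<le> G y * norm (X n - t)"
        by (rule field_differentiable_bound[OF S(1)]) (use deriv[OF y] bound[OF y] X S in auto)
      moreover have "X n \<noteq> t" using X by auto
      ultimately show "norm (q n y) \<le> G y"
        by (simp add: q_def abs_divide divide_le_eq)
    qed
  qed
  then show "(\<lambda>n. ((\<integral>y. F y (X n) \<partial>M) - (\<integral>y. F y t \<partial>M)) / (X n - t)) \<longlonglongrightarrow> (\<integral>y. F' y t \<partial>M)"
    by (simp only: difference_quotient)
qed

lemma sets_dens_measure: "sets (dens_measure S d) = sets (restrict_space lborel S)"
  by (simp add: dens_measure_def)

lemma space_dens_measure: "space (dens_measure S d) = S"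
  by (simp add: dens_measure_def space_restrict_space)

lemma sets_dens_measure_eq: "sets (dens_measure S d) = sets (dens_measure S d')"
  by (simp add: sets_dens_measure)

lemma measurable_dens_measure_eq:
  "dens_measure S d \<rightarrow>\<^sub>M dens_measure S e = dens_measure S d' \<rightarrow>\<^sub>M dens_measure S e'"
  by (rule measurable_cong_sets) (rule sets_dens_measure_eq)+

lemma borel_measurable_dens_measure_eq:
  "borel_measurable (dens_measure S d) = borel_measurable (dens_measure S d')"
  by (rule measurable_cong_sets) (rule sets_dens_measure_eq, rule refl)

lemma continuous_on_borel_measurable_dens_measure:
  fixes h :: "'a::euclidean_space \<Rightarrow> 'b::topological_space"
  assumes "continuous_on S h"
  shows "h \<in> borel_measurable (dens_measure S d)"
proof -
  have "sets (dens_measure S d) = sets (restrict_space borel S)"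
    unfolding sets_dens_measure by (rule sets_restrict_space_cong) simp
  from measurable_cong_sets[OF this refl] borel_measurable_continuous_on_restrict[OF assms]
  show ?thesis by blast
qed

lemma continuous_on_measurable_dens_measure:
  fixes h :: "'a::euclidean_space \<Rightarrow> 'a"
  assumes "continuous_on S h" "h \<in> S \<rightarrow> S"
  shows "h \<in> dens_measure S d \<rightarrow>\<^sub>M dens_measure S e"
proof -
  have "h \<in> dens_measure S d \<rightarrow>\<^sub>M restrict_space lborel S"
  proof (rule measurable_restrict_space2)
    show "h \<in> space (dens_measure S d) \<rightarrow> S" using assms(2) by (simp add: space_dens_measure)
    show "h \<in> dens_measure S d \<rightarrow>\<^sub>M lborel"
      using continuous_on_borel_measurable_dens_measure[OF assms(1)] by simp
  qed
  then show ?thesis by (simp add: measurable_cong_sets[OF refl sets_dens_measure])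
qed

lemma set_integral_mult_density:
  fixes h d :: "'a::euclidean_space \<Rightarrow> real"
  assumes "S \<in> sets lborel"
    and "h \<in> borel_measurable (dens_measure S d)" "d \<in> borel_measurable (dens_measure S d)"
    and "\<And>x. x \<in> S \<Longrightarrow> 0 \<le> d x"
  shows "(LBINT x:S. h x * d x) = (\<integral>x. h x \<partial>dens_measure S d)"
proof -
  have h: "h \<in> borel_measurable (restrict_space lborel S)"
    and d: "d \<in> borel_measurable (restrict_space lborel S)"
    using assms(2,3) by (simp_all add: measurable_cong_sets[OF sets_dens_measure refl])
  have "(LBINT x:S. h x * d x) = (\<integral>x. d x *\<^sub>R h x \<partial>restrict_space lborel S)"
    using assms(1) by (simp add: set_lebesgue_integral_def integral_restrict_space mult.commute)
  also have "\<dots> = (\<integral>x. h x \<partial>dens_measure S d)"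
    unfolding dens_measure_def
    by (rule integral_density[symmetric, OF h d]) (use assms(4) in \<open>auto simp: space_restrict_space\<close>)
  finally show ?thesis .
qed

lemma integral_measure_preserving:
  fixes h :: "'a \<Rightarrow> 'b::{banach, second_countable_topology}"
  assumes "distr M M \<phi> = M" "\<phi> \<in> M \<rightarrow>\<^sub>M M" "h \<in> borel_measurable M"
  shows "(\<integral>x. h (\<phi> x) \<partial>M) = (\<integral>x. h x \<partial>M)"
  using integral_distr[OF assms(2,3)] assms(1) by simp

lemma continuous_on_compact_bound:
  fixes h :: "'a::metric_space \<Rightarrow> 'b::real_normed_vector"
  assumes "continuous_on S h" "compact S"
  obtains B where "\<And>x. x \<in> S \<Longrightarrow> norm (h x) \<le> B"
  using compact_imp_bounded[OF compact_continuous_image[OF assms]] by (auto simp: bounded_iff)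

lemma continuous_on_slice:
  assumes "\<forall>x\<in>A. \<forall>t\<in>B. F differentiable (at (x, t) within A \<times> B)" "t \<in> B"
  shows "continuous_on A (\<lambda>x. F (x, t))"
proof -
  have "continuous_on (A \<times> B) F"
    unfolding continuous_on_eq_continuous_within
    using assms(1) by (auto intro: differentiable_imp_continuous_within)
  moreover have "continuous_on A (\<lambda>x. (x, t))"
    by (intro continuous_on_Pair continuous_on_id continuous_on_const)
  ultimately show ?thesis
    by (rule continuous_on_compose2) (use assms(2) in auto)
qed

lemma continuous_on_linear_apply:
  fixes L :: "'a::topological_space \<Rightarrow> 'b::euclidean_space \<Rightarrow> 'c::real_normed_vector"
  assumes "\<And>x. x \<in> S \<Longrightarrow> linear (L x)" "\<And>b. b \<in> Basis \<Longrightarrow> continuous_on S (\<lambda>x. L x b)"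
    and "continuous_on S w"
  shows "continuous_on S (\<lambda>x. L x (w x))"
proof (rule continuous_on_eq)
  show "continuous_on S (\<lambda>x. \<Sum>b\<in>Basis. (w x \<bullet> b) *\<^sub>R L x b)"
    by (intro continuous_intros assms(2,3))
  show "(\<Sum>b\<in>Basis. (w x \<bullet> b) *\<^sub>R L x b) = L x (w x)" if "x \<in> S" for x
  proof -
    have "L x (w x) = L x (\<Sum>b\<in>Basis. (w x \<bullet> b) *\<^sub>R b)" by (simp add: euclidean_representation)
    also have "\<dots> = (\<Sum>b\<in>Basis. (w x \<bullet> b) *\<^sub>R L x b)"
      using assms(1)[OF that] by (simp add: linear_sum linear_scale)
    finally show ?thesis ..
  qed
qed

lemma C1_on_has_derivative:
  assumes "C1_on S h" "x \<in> S"
  shows "(h has_derivative frechet_derivative h (at x)) (at x)"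
  using assms frechet_derivative_works by (fastforce simp: C1_on_def One_nat_def)

lemma C1_on_imp_continuous_on:
  assumes "C1_on S h"
  shows "continuous_on S h"
proof (intro continuous_at_imp_continuous_on ballI)
  fix x assume "x \<in> S"
  then show "isCont h x" by (rule has_derivative_continuous[OF C1_on_has_derivative[OF assms]])
qed

lemma C1_on_continuous_partial:
  assumes "C1_on S h" "b \<in> Basis"
  shows "continuous_on S (\<lambda>x. frechet_derivative h (at x) b)"
  using assms continuous_on_subset by (fastforce simp: C1_on_def One_nat_def)

lemma grad_inner_eq_derivative:
  assumes "(\<phi> has_derivative D) (at x)"
  shows "grad \<phi> x \<bullet> v = D v"
proof -
  have "linear D" using assms has_derivative_linear by blast
  have "grad \<phi> x \<bullet> v = (\<Sum>b\<in>Basis. (v \<bullet> b) * D b)"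
    unfolding grad_def frechet_derivative_at[OF assms, symmetric]
    by (simp add: inner_sum_right inner_commute mult.commute)
  also have "\<dots> = D (\<Sum>b\<in>Basis. (v \<bullet> b) *\<^sub>R b)"
    by (simp add: linear_sum[OF \<open>linear D\<close>] linear_scale[OF \<open>linear D\<close>])
  finally show ?thesis by (simp add: euclidean_representation)
qed

lemma sum_grad_components_inner:
  fixes f :: "'a::euclidean_space \<Rightarrow> real^'m"
  assumes "(f has_derivative D) (at x)"
  shows "(\<Sum>i\<in>UNIV. (c $ i) *\<^sub>R grad (\<lambda>y. f y $ i) x) \<bullet> v = c \<bullet> D v"
proof -
  have "grad (\<lambda>y. f y $ i) x \<bullet> v = D v $ i" for i
    by (rule grad_inner_eq_derivative[OF bounded_linear.has_derivative[OF bounded_linear_vec_nth assms]])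
  then show ?thesis by (simp add: inner_sum_left inner_vec_def)
qed

lemma has_real_derivative_inner_const:
  assumes "(h has_vector_derivative v) F"
  shows "((\<lambda>\<tau>. c \<bullet> h \<tau>) has_real_derivative c \<bullet> v) F"
proof -
  have "((\<lambda>\<tau>. c \<bullet> h \<tau>) has_derivative (\<lambda>x. c \<bullet> (x *\<^sub>R v))) F"
    using has_derivative_inner_right assms unfolding has_vector_derivative_def by blast
  moreover have "(\<lambda>x. c \<bullet> (x *\<^sub>R v)) = (*) (c \<bullet> v)" by (auto simp: mult.commute)
  ultimately show ?thesis by (simp add: has_field_derivative_def)
qed

lemma power2_norm_diff:
  fixes u v :: "'a::real_inner"
  shows "(norm (u - v))\<^sup>2 = (norm u)\<^sup>2 - 2 * (u \<bullet> v) + (norm v)\<^sup>2"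
  by (simp add: power2_norm_eq_inner inner_diff_left inner_diff_right inner_commute)

lemma abs_inner_add_le:
  fixes a b :: "'a::real_inner" and c d :: "'b::real_inner"
  assumes "norm a \<le> B" "norm b \<le> B" "norm d \<le> B"
  shows "\<bar>a \<bullet> b + c \<bullet> d\<bar> \<le> B * B + B * norm c"
proof -
  have "\<bar>a \<bullet> b\<bar> \<le> norm a * norm b" "\<bar>c \<bullet> d\<bar> \<le> norm c * norm d"
    by (rule Cauchy_Schwarz_ineq2)+
  moreover have "norm a * norm b \<le> B * B"
    using assms(1,2) by (intro mult_mono) (auto intro: order_trans[OF norm_ge_zero])
  moreover have "norm c * norm d \<le> B * norm c"
    using assms(3) by (subst mult.commute) (simp add: mult_right_mono)
  ultimately show ?thesis
    using abs_triangle_ineq[of "a \<bullet> b" "c \<bullet> d"] by linarith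
qed

locale measure_preserving_flow =
  fixes \<Omega> :: "'a::euclidean_space set" and \<mu> :: "'a \<Rightarrow> real" and \<xi> :: "'a \<Rightarrow> 'a"
    and s sinv :: "'a \<Rightarrow> real \<Rightarrow> 'a"
  assumes compact_domain: "compact \<Omega>"
    and density_continuous: "continuous_on \<Omega> \<mu>"
    and density_pos: "\<And>x. x \<in> \<Omega> \<Longrightarrow> \<mu> x > 0"
    and finite_density_measure: "finite_measure (dens_measure \<Omega> \<mu>)"
    and field_continuous: "continuous_on \<Omega> \<xi>"
    and flow_maps: "\<And>x t. x \<in> \<Omega> \<Longrightarrow> t \<ge> 0 \<Longrightarrow> s x t \<in> \<Omega>"
    and flow_continuous: "\<And>t. t \<ge> 0 \<Longrightarrow> continuous_on \<Omega> (\<lambda>x. s x t)"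
    and flow_ode: "\<And>x t. x \<in> \<Omega> \<Longrightarrow> t \<ge> 0 \<Longrightarrow>
      ((\<lambda>\<tau>. s x \<tau>) has_vector_derivative (1 / \<mu> (s x t)) *\<^sub>R \<xi> (s x t)) (at t within {0..})"
    and flow_inv_maps: "\<And>x t. x \<in> \<Omega> \<Longrightarrow> t \<ge> 0 \<Longrightarrow> sinv x t \<in> \<Omega>"
    and flow_inv_left: "\<And>x t. x \<in> \<Omega> \<Longrightarrow> t \<ge> 0 \<Longrightarrow> sinv (s x t) t = x"
    and flow_inv_right: "\<And>x t. x \<in> \<Omega> \<Longrightarrow> t \<ge> 0 \<Longrightarrow> s (sinv x t) t = x"
    and flow_preserves: "\<And>t. t \<ge> 0 \<Longrightarrow>
      distr (dens_measure \<Omega> \<mu>) (dens_measure \<Omega> \<mu>) (\<lambda>x. s x t) = dens_measure \<Omega> \<mu>"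
begin

abbreviation M :: "'a measure" where "M \<equiv> dens_measure \<Omega> \<mu>"

sublocale finite_measure M
  by (rule finite_density_measure)

definition velocity :: "'a \<Rightarrow> 'a" where
  "velocity x = (1 / \<mu> x) *\<^sub>R \<xi> x"

lemma space_M: "space M = \<Omega>"
  by (rule space_dens_measure)

lemma domain_sets: "\<Omega> \<in> sets lborel"
  using compact_imp_closed[OF compact_domain] by simp

lemma velocity_continuous: "continuous_on \<Omega> velocity"
  unfolding velocity_def
  by (intro continuous_intros density_continuous field_continuous) (auto dest: density_pos)

lemma measurable_identity [measurable]: "(\<lambda>x. x) \<in> borel_measurable M"
  by (rule continuous_on_borel_measurable_dens_measure[OF continuous_on_id])

lemma measurable_density [measurable]: "\<mu> \<in> borel_measurable M"
  by (rule continuous_on_borel_measurable_dens_measure[OF density_continuous])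

lemma measurable_velocity [measurable]: "velocity \<in> borel_measurable M"
  by (rule continuous_on_borel_measurable_dens_measure[OF velocity_continuous])

lemma flow_inv_continuous:
  assumes "t \<ge> 0"
  shows "continuous_on \<Omega> (\<lambda>x. sinv x t)"
proof -
  have "(\<lambda>x. s x t) ` \<Omega> = \<Omega>"
  proof
    show "(\<lambda>x. s x t) ` \<Omega> \<subseteq> \<Omega>" using flow_maps assms by auto
    show "\<Omega> \<subseteq> (\<lambda>x. s x t) ` \<Omega>"
    proof
      fix x assume "x \<in> \<Omega>"
      then show "x \<in> (\<lambda>x. s x t) ` \<Omega>"
        using flow_inv_right[of x t] flow_inv_maps[of x t] assms by (metis image_eqI)
    qed
  qed
  moreover have "continuous_on ((\<lambda>x. s x t) ` \<Omega>) (\<lambda>x. sinv x t)"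
    by (rule continuous_on_inv[OF flow_continuous[OF assms] compact_domain]) (use flow_inv_left assms in auto)
  ultimately show ?thesis by simp
qed

lemma measurable_flow: "t \<ge> 0 \<Longrightarrow> (\<lambda>x. s x t) \<in> M \<rightarrow>\<^sub>M M"
  by (rule continuous_on_measurable_dens_measure[OF flow_continuous]) (auto intro: flow_maps)

lemma measurable_flow_inv: "t \<ge> 0 \<Longrightarrow> (\<lambda>x. sinv x t) \<in> M \<rightarrow>\<^sub>M M"
  by (rule continuous_on_measurable_dens_measure[OF flow_inv_continuous]) (auto intro: flow_inv_maps)

lemma integral_flow_invariant:
  fixes h :: "'a \<Rightarrow> 'b::{banach, second_countable_topology}"
  assumes "t \<ge> 0" "h \<in> borel_measurable M"
  shows "(\<integral>y. h (s y t) \<partial>M) = (\<integral>y. h y \<partial>M)"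
  using integral_measure_preserving[OF flow_preserves[OF assms(1)] measurable_flow[OF assms(1)] assms(2)] .

lemma set_integral_density_eq_integral_flow:
  fixes h :: "'a \<Rightarrow> real"
  assumes "t \<ge> 0" "h \<in> borel_measurable M"
  shows "(LBINT x:\<Omega>. h x * \<mu> x) = (\<integral>y. h (s y t) \<partial>M)"
proof -
  have "(LBINT x:\<Omega>. h x * \<mu> x) = (\<integral>x. h x \<partial>M)"
    by (rule set_integral_mult_density[OF domain_sets assms(2) measurable_density])
       (use density_pos in \<open>auto intro: less_imp_le\<close>)
  then show ?thesis using integral_flow_invariant[OF assms] by simp
qed

end

locale flow_energy = measure_preserving_flow \<Omega> \<mu> \<xi> s sinv
  for \<Omega> :: "'a::euclidean_space set" and \<mu> \<xi> s sinv +
  fixes T0 :: "'a \<Rightarrow> 'a" and f g :: "'a \<Rightarrow> real^'m" and Df :: "'a \<Rightarrow> 'a \<Rightarrow> real^'m"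
  assumes T0_maps: "\<And>x. x \<in> \<Omega> \<Longrightarrow> T0 x \<in> \<Omega>"
    and T0_measurable [measurable]: "T0 \<in> M \<rightarrow>\<^sub>M M"
    and g_measurable [measurable]: "g \<in> borel_measurable M"
    and g_T0_square_integrable: "integrable M (\<lambda>y. (norm (g (T0 y)))\<^sup>2)"
    and f_derivative: "\<And>x. x \<in> \<Omega> \<Longrightarrow> (f has_derivative Df x) (at x)"
    and f_partials_continuous: "\<And>b. b \<in> Basis \<Longrightarrow> continuous_on \<Omega> (\<lambda>x. Df x b)"
begin

definition coupling :: "real \<Rightarrow> 'a \<Rightarrow> real" where
  "coupling \<tau> y = T0 y \<bullet> s y \<tau> + g (T0 y) \<bullet> f (s y \<tau>)"

definition coupling_rate :: "real \<Rightarrow> 'a \<Rightarrow> real" where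
  "coupling_rate \<tau> y = T0 y \<bullet> velocity (s y \<tau>) + g (T0 y) \<bullet> Df (s y \<tau>) (velocity (s y \<tau>))"

lemma f_continuous: "continuous_on \<Omega> f"
  using f_derivative has_derivative_continuous continuous_at_imp_continuous_on by blast

lemma measurable_f [measurable]: "f \<in> borel_measurable M"
  by (rule continuous_on_borel_measurable_dens_measure[OF f_continuous])

lemma f_rate_continuous: "continuous_on \<Omega> (\<lambda>x. Df x (velocity x))"
  by (rule continuous_on_linear_apply[OF _ f_partials_continuous velocity_continuous])
     (use f_derivative has_derivative_linear in blast)

lemma measurable_f_rate [measurable]: "(\<lambda>x. Df x (velocity x)) \<in> borel_measurable M"
  by (rule continuous_on_borel_measurable_dens_measure[OF f_rate_continuous])

lemma uniform_bound:
  obtains B where "\<And>x. x \<in> \<Omega> \<Longrightarrow>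
    norm x \<le> B \<and> norm (f x) \<le> B \<and> norm (velocity x) \<le> B \<and> norm (Df x (velocity x)) \<le> B"
proof -
  have "continuous_on \<Omega> (\<lambda>x. norm x + norm (f x) + norm (velocity x) + norm (Df x (velocity x)))"
    by (intro continuous_intros f_continuous velocity_continuous f_rate_continuous)
  then obtain B where B: "\<And>x. x \<in> \<Omega> \<Longrightarrow>
      norm (norm x + norm (f x) + norm (velocity x) + norm (Df x (velocity x))) \<le> B"
    using continuous_on_compact_bound[OF _ compact_domain] by blast
  show ?thesis
  proof (rule that)
    fix x assume "x \<in> \<Omega>"
    then have "norm x + norm (f x) + norm (velocity x) + norm (Df x (velocity x)) \<le> B"
      using B by (simp add: abs_le_iff)
    then show "norm x \<le> B \<and> norm (f x) \<le> B \<and> norm (velocity x) \<le> B \<and> norm (Df x (velocity x)) \<le> B"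
      using norm_ge_zero[of x] norm_ge_zero[of "f x"] norm_ge_zero[of "velocity x"]
        norm_ge_zero[of "Df x (velocity x)"] by linarith
  qed
qed

lemma integrable_norm_g_T0: "integrable M (\<lambda>y. norm (g (T0 y)))"
  by (rule square_integrable_imp_integrable[OF _ g_T0_square_integrable]) measurable

lemma integrable_dominated_by_g:
  assumes "h \<in> borel_measurable M" "\<And>y. y \<in> \<Omega> \<Longrightarrow> \<bar>h y\<bar> \<le> A + C * norm (g (T0 y))"
  shows "integrable M h"
proof (rule Bochner_Integration.integrable_bound[OF _ assms(1)])
  show "integrable M (\<lambda>y. A + C * norm (g (T0 y)))"
    using integrable_norm_g_T0 by simp
  show "AE y in M. norm (h y) \<le> norm (A + C * norm (g (T0 y)))"
    using assms(2) by (intro AE_I2) (fastforce simp: space_M)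
qed

lemma integrable_coupling:
  assumes "\<tau> \<ge> 0"
  shows "integrable M (coupling \<tau>)"
proof -
  note [measurable] = measurable_flow[OF assms]
  obtain B where B: "\<And>x. x \<in> \<Omega> \<Longrightarrow> norm x \<le> B \<and> norm (f x) \<le> B"
    using uniform_bound by metis
  show ?thesis
  proof (rule integrable_dominated_by_g)
    show "coupling \<tau> \<in> borel_measurable M" unfolding coupling_def by measurable
    show "\<bar>coupling \<tau> y\<bar> \<le> B * B + B * norm (g (T0 y))" if "y \<in> \<Omega>" for y
      unfolding coupling_def
      by (rule abs_inner_add_le) (use B[OF T0_maps[OF that]] B[OF flow_maps[OF that assms]] in auto)
  qed
qed

lemma energy_eq_coupling:
  assumes "\<tau> \<ge> 0"
  shows "energy \<Omega> \<mu> f g (\<lambda>x. T0 (sinv x \<tau>)) =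
    (\<integral>y. (norm (T0 y))\<^sup>2 + (norm (g (T0 y)))\<^sup>2 \<partial>M) + (\<integral>x. (norm x)\<^sup>2 + (norm (f x))\<^sup>2 \<partial>M)
      - 2 * (\<integral>y. coupling \<tau> y \<partial>M)"
proof -
  note [measurable] = measurable_flow[OF assms] measurable_flow_inv[OF assms]
  obtain B where B: "\<And>x. x \<in> \<Omega> \<Longrightarrow> norm x \<le> B \<and> norm (f x) \<le> B"
    using uniform_bound by metis
  define a where "a y = (norm (T0 y))\<^sup>2 + (norm (g (T0 y)))\<^sup>2" for y
  define b where "b x = (norm x)\<^sup>2 + (norm (f x))\<^sup>2" for x
  define e where "e x = (norm (T0 (sinv x \<tau>) - x))\<^sup>2 + (norm (g (T0 (sinv x \<tau>)) - f x))\<^sup>2" for x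
  have [measurable]: "b \<in> borel_measurable M" "e \<in> borel_measurable M"
    unfolding b_def e_def by measurable
  have b_bound: "\<bar>b x\<bar> \<le> 2 * B\<^sup>2 + 0 * norm (g (T0 y))" if "x \<in> \<Omega>" for x y
  proof -
    have "(norm x)\<^sup>2 \<le> B\<^sup>2" "(norm (f x))\<^sup>2 \<le> B\<^sup>2"
      using B[OF that] by (auto intro: power_mono)
    then show ?thesis by (simp add: b_def)
  qed
  have "integrable M (\<lambda>y. (norm (T0 y))\<^sup>2)"
    by (rule integrable_dominated_by_g[where A="B\<^sup>2" and C=0], measurable)
       (use B T0_maps in \<open>auto intro: power_mono\<close>)
  then have int_a: "integrable M a"
    unfolding a_def using g_T0_square_integrable by simp
  have int_b: "integrable M b"
    by (rule integrable_dominated_by_g[OF _ b_bound]) measurable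
  have int_b_flow: "integrable M (\<lambda>y. b (s y \<tau>))"
    by (rule integrable_dominated_by_g[OF _ b_bound[OF flow_maps[OF _ assms]]]) measurable
  have "energy \<Omega> \<mu> f g (\<lambda>x. T0 (sinv x \<tau>)) = (LBINT x:\<Omega>. e x * \<mu> x)"
    unfolding energy_def e_def ..
  also have "\<dots> = (\<integral>y. e (s y \<tau>) \<partial>M)"
    by (rule set_integral_density_eq_integral_flow[OF assms]) measurable
  also have "\<dots> = (\<integral>y. a y + b (s y \<tau>) - 2 * coupling \<tau> y \<partial>M)"
    by (rule Bochner_Integration.integral_cong[OF refl])
       (simp add: space_M e_def a_def b_def coupling_def flow_inv_left assms power2_norm_diff)
  also have "\<dots> = integral\<^sup>L M a + (\<integral>y. b (s y \<tau>) \<partial>M) - 2 * (\<integral>y. coupling \<tau> y \<partial>M)"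
    using int_a int_b_flow integrable_coupling[OF assms] by simp
  also have "(\<integral>y. b (s y \<tau>) \<partial>M) = integral\<^sup>L M b"
    by (rule integral_flow_invariant[OF assms]) measurable
  finally show ?thesis unfolding a_def b_def .
qed

lemma coupling_has_derivative:
  assumes y: "y \<in> \<Omega>" and \<tau>: "\<tau> \<ge> 0"
  shows "((\<lambda>\<tau>. coupling \<tau> y) has_real_derivative coupling_rate \<tau> y) (at \<tau> within {0..})"
proof -
  have flow: "((\<lambda>\<tau>. s y \<tau>) has_vector_derivative velocity (s y \<tau>)) (at \<tau> within {0..})"
    using flow_ode[OF assms] unfolding velocity_def .
  have "(f has_derivative Df (s y \<tau>)) (at (s y \<tau>) within (\<lambda>\<tau>. s y \<tau>) ` {0..})"
    by (rule has_derivative_at_withinI[OF f_derivative[OF flow_maps[OF assms]]])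
  from vector_derivative_diff_chain_within[OF flow this]
  have "((\<lambda>\<tau>. f (s y \<tau>)) has_vector_derivative Df (s y \<tau>) (velocity (s y \<tau>))) (at \<tau> within {0..})"
    by (simp add: comp_def)
  from DERIV_add[OF has_real_derivative_inner_const[OF flow] has_real_derivative_inner_const[OF this]]
  show ?thesis unfolding coupling_def coupling_rate_def .
qed

lemma integral_coupling_has_derivative:
  assumes "t \<ge> 0"
  shows "((\<lambda>\<tau>. \<integral>y. coupling \<tau> y \<partial>M) has_real_derivative (\<integral>y. coupling_rate t y \<partial>M))
    (at t within {0..})"
proof -
  obtain B where B: "\<And>x. x \<in> \<Omega> \<Longrightarrow>
      norm x \<le> B \<and> norm (velocity x) \<le> B \<and> norm (Df x (velocity x)) \<le> B"
    using uniform_bound by metis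
  note [measurable] = measurable_flow[OF assms]
  show ?thesis
  proof (rule has_real_derivative_integral[where G="\<lambda>y. B * B + B * norm (g (T0 y))"])
    show "\<bar>coupling_rate \<tau> y\<bar> \<le> B * B + B * norm (g (T0 y))" if "y \<in> space M" "\<tau> \<in> {0..}" for y \<tau>
    proof -
      have y: "y \<in> \<Omega>" and \<tau>: "\<tau> \<ge> 0" using that by (auto simp: space_M)
      show ?thesis unfolding coupling_rate_def
        by (rule abs_inner_add_le) (use B[OF T0_maps[OF y]] B[OF flow_maps[OF y \<tau>]] in auto)
    qed
    show "(\<lambda>y. coupling_rate t y) \<in> borel_measurable M"
      unfolding coupling_rate_def by measurable
  qed (use assms integrable_coupling coupling_has_derivative integrable_norm_g_T0 in \<open>auto simp: space_M\<close>)
qed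

lemma set_integral_flux_eq:
  assumes "t \<ge> 0"
  shows "(LBINT x:\<Omega>. (2 *\<^sub>R T0 (sinv x t)
      + 2 *\<^sub>R (\<Sum>i\<in>UNIV. (g (T0 (sinv x t)) $ i) *\<^sub>R grad (\<lambda>y. f y $ i) x)) \<bullet> \<xi> x)
    = 2 * (\<integral>y. coupling_rate t y \<partial>M)"
proof -
  note [measurable] = measurable_flow[OF assms] measurable_flow_inv[OF assms]
  define q where "q x = 2 * (T0 (sinv x t) \<bullet> velocity x + g (T0 (sinv x t)) \<bullet> Df x (velocity x))" for x
  have "(LBINT x:\<Omega>. (2 *\<^sub>R T0 (sinv x t)
      + 2 *\<^sub>R (\<Sum>i\<in>UNIV. (g (T0 (sinv x t)) $ i) *\<^sub>R grad (\<lambda>y. f y $ i) x)) \<bullet> \<xi> x)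
    = (LBINT x:\<Omega>. q x * \<mu> x)"
  proof (rule set_lebesgue_integral_cong[OF domain_sets], intro allI impI)
    fix x assume x: "x \<in> \<Omega>"
    have field: "\<xi> x = \<mu> x *\<^sub>R velocity x"
      using density_pos[OF x] by (simp add: velocity_def)
    have "Df x (\<xi> x) = \<mu> x *\<^sub>R Df x (velocity x)"
      unfolding field using f_derivative[OF x] has_derivative_linear linear_scale by blast
    then show "(2 *\<^sub>R T0 (sinv x t)
      + 2 *\<^sub>R (\<Sum>i\<in>UNIV. (g (T0 (sinv x t)) $ i) *\<^sub>R grad (\<lambda>y. f y $ i) x)) \<bullet> \<xi> x = q x * \<mu> x"
      using sum_grad_components_inner[OF f_derivative[OF x]]
      by (simp add: q_def field inner_add_left algebra_simps)
  qed
  also have "\<dots> = (\<integral>y. q (s y t) \<partial>M)"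
    by (rule set_integral_density_eq_integral_flow[OF assms]) (unfold q_def, measurable)
  also have "\<dots> = (\<integral>y. 2 * coupling_rate t y \<partial>M)"
    by (rule Bochner_Integration.integral_cong[OF refl])
       (simp add: space_M q_def coupling_rate_def flow_inv_left assms)
  finally show ?thesis by simp
qed

theorem energy_has_derivative:
  assumes "t \<ge> 0"
  shows "((\<lambda>\<tau>. energy \<Omega> \<mu> f g (\<lambda>x. T0 (sinv x \<tau>))) has_real_derivative
    - (LBINT x:\<Omega>. (2 *\<^sub>R T0 (sinv x t)
      + 2 *\<^sub>R (\<Sum>i\<in>UNIV. (g (T0 (sinv x t)) $ i) *\<^sub>R grad (\<lambda>y. f y $ i) x)) \<bullet> \<xi> x))
    (at t within {0..})"
proof -
  have "((\<lambda>\<tau>. K - 2 * (\<integral>y. coupling \<tau> y \<partial>M)) has_real_derivative - (2 * (\<integral>y. coupling_rate t y \<partial>M)))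
      (at t within {0..})" for K
    using DERIV_diff[OF DERIV_const DERIV_cmult[OF integral_coupling_has_derivative[OF assms]]] by simp
  then have "((\<lambda>\<tau>. energy \<Omega> \<mu> f g (\<lambda>x. T0 (sinv x \<tau>))) has_real_derivative
      - (2 * (\<integral>y. coupling_rate t y \<partial>M))) (at t within {0..})"
    by (rule has_field_derivative_transform_within[where d=1]) (use assms energy_eq_coupling in auto)
  then show ?thesis unfolding set_integral_flux_eq[OF assms] .
qed

end

theorem mainTheorem6:
  fixes \<Omega> :: "'a::euclidean_space set"
    and \<mu> \<nu> :: "'a \<Rightarrow> real"
    and \<xi> :: "'a \<Rightarrow> 'a"
    and s sinv :: "'a \<Rightarrow> real \<Rightarrow> 'a"
    and T0 :: "'a \<Rightarrow> 'a"
    and f g :: "'a \<Rightarrow> real^'m"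
  assumes dom: "compact_smooth_domain \<Omega>"
    and mu_C1: "C1_on \<Omega> \<mu>" and mu_pos: "\<forall>x\<in>\<Omega>. \<mu> x > 0"
    and mu_prob: "prob_space (dens_measure \<Omega> \<mu>)"
    and nu_C1: "C1_on \<Omega> \<nu>" and nu_nonneg: "\<forall>x\<in>\<Omega>. \<nu> x \<ge> 0"
    and nu_prob: "prob_space (dens_measure \<Omega> \<nu>)"
    and chi_C1: "C1_on \<Omega> \<xi>"
    and chi_div: "\<forall>x\<in>\<Omega>. divergence \<xi> x = 0"
    and chi_bdry: "\<forall>x\<in>frontier \<Omega>. \<xi> x \<bullet> outward_normal \<Omega> x = 0"
    and s_maps: "\<forall>x\<in>\<Omega>. \<forall>t\<ge>0. s x t \<in> \<Omega>"
    and s_diff: "\<forall>x\<in>\<Omega>. \<forall>t\<ge>0.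
        (\<lambda>p. s (fst p) (snd p)) differentiable (at (x, t) within \<Omega> \<times> {0..})"
    and s_init: "\<forall>x\<in>\<Omega>. s x 0 = x"
    and s_ode: "\<forall>x\<in>\<Omega>. \<forall>t\<ge>0. ((\<lambda>\<tau>. s x \<tau>) has_vector_derivative
        (1 / \<mu> (s x t)) *\<^sub>R \<xi> (s x t)) (at t within {0..})"
    and sinv_maps: "\<forall>x\<in>\<Omega>. \<forall>t\<ge>0. sinv x t \<in> \<Omega>"
    and sinv_left: "\<forall>x\<in>\<Omega>. \<forall>t\<ge>0. sinv (s x t) t = x"
    and sinv_right: "\<forall>x\<in>\<Omega>. \<forall>t\<ge>0. s (sinv x t) t = x"
    and s_push: "\<forall>t\<ge>0. distr (dens_measure \<Omega> \<mu>) (dens_measure \<Omega> \<mu>) (\<lambda>x. s x t)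
        = dens_measure \<Omega> \<mu>"
    and T0_maps: "T0 \<in> \<Omega> \<rightarrow> \<Omega>"
    and T0_meas: "T0 \<in> measurable (dens_measure \<Omega> \<mu>) (dens_measure \<Omega> \<nu>)"
    and T0_push: "distr (dens_measure \<Omega> \<mu>) (dens_measure \<Omega> \<nu>) T0 = dens_measure \<Omega> \<nu>"
    and f_C1: "C1_on \<Omega> f"
    and g_meas: "g \<in> borel_measurable (dens_measure \<Omega> \<nu>)"
    and g_L2: "integrable (dens_measure \<Omega> \<nu>) (\<lambda>y. (norm (g y))\<^sup>2)"
    and t_nonneg: "t \<ge> 0"
  shows "((\<lambda>\<tau>. energy \<Omega> \<mu> f g (\<lambda>x. T0 (sinv x \<tau>))) has_real_derivative
      - set_lebesgue_integral lborel \<Omega>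
          (\<lambda>x. (2 *\<^sub>R T0 (sinv x t)
                + 2 *\<^sub>R (\<Sum>i\<in>UNIV. (g (T0 (sinv x t)) $ i) *\<^sub>R grad (\<lambda>y. f y $ i) x)) \<bullet> \<xi> x))
     (at t within {0..})"
proof -
  have flow_continuous: "continuous_on \<Omega> (\<lambda>x. s x \<tau>)" if "\<tau> \<ge> 0" for \<tau>
    using continuous_on_slice[of \<Omega> "{0..}" "\<lambda>p. s (fst p) (snd p)" \<tau>] s_diff that by simp
  have g_T0_square_integrable: "integrable (dens_measure \<Omega> \<mu>) (\<lambda>y. (norm (g (T0 y)))\<^sup>2)"
    using g_L2 T0_push integrable_distr_eq[OF T0_meas, of "\<lambda>y. (norm (g y))\<^sup>2"] g_meas by simp
  interpret flow_energy \<Omega> \<mu> \<xi> s sinv T0 f g "\<lambda>x. frechet_derivative f (at x)"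
  proof (intro flow_energy.intro measure_preserving_flow.intro flow_energy_axioms.intro)
    show "compact \<Omega>" using dom by (simp add: compact_smooth_domain_def)
    show "finite_measure (dens_measure \<Omega> \<mu>)" using mu_prob by (rule prob_space.finite_measure)
    show "continuous_on \<Omega> \<mu>" using mu_C1 by (rule C1_on_imp_continuous_on)
    show "continuous_on \<Omega> \<xi>" using chi_C1 by (rule C1_on_imp_continuous_on)
    show "\<And>x. x \<in> \<Omega> \<Longrightarrow> (f has_derivative frechet_derivative f (at x)) (at x)"
      using f_C1 by (rule C1_on_has_derivative)
    show "\<And>b. b \<in> Basis \<Longrightarrow> continuous_on \<Omega> (\<lambda>x. frechet_derivative f (at x) b)"
      using f_C1 by (rule C1_on_continuous_partial)
    show "T0 \<in> dens_measure \<Omega> \<mu> \<rightarrow>\<^sub>M dens_measure \<Omega> \<mu>"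
      using T0_meas by (simp only: measurable_dens_measure_eq[of \<Omega> \<mu> \<nu> \<mu> \<mu>])
    show "g \<in> borel_measurable (dens_measure \<Omega> \<mu>)"
      using g_meas by (simp only: borel_measurable_dens_measure_eq[of \<Omega> \<nu> \<mu>])
  qed (use mu_pos s_maps flow_continuous s_ode sinv_maps sinv_left sinv_right s_push T0_maps
         g_T0_square_integrable in auto)
  show ?thesis by (rule energy_has_derivative[OF t_nonneg])
qed

end
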